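(* Let $d\ge 1$ and $N\ge 1$, and let $(X_1,Y_1),\dots,(X_N,Y_N),(X_{test},Y_{test})$ be i.i.d. random variables with values in $\mathbb{R}^d\times\mathbb{R}$ and common (unknown) distribution $P_{XY}$. Let $f:\mathbb{R}^d\to\mathbb{R}$ be a fixed point-prediction model (intended as an approximation of $\mathrm{E}(Y\mid X)$), and set $A_n=(f(X_n)-Y_n)^2$ for $n=1,\dots,N$ and $A_{test}=(f(X_{test})-Y_{test})^2$. Let $\{\phi_x:\mathbb{R}_+\to\mathcal{B}_x\}_{x\in\mathbb{R}^d}$ be a family of differentiable functions such that (i) $\phi_x'(a)>0$ for all $x\in\mathbb{R}^d$ and all $a\in\mathbb{R}_+$, and (ii) $\mathcal{B}_x=\phi_x(\mathbb{R}_+)$ is the same set for all $x\in\mathbb{R}^d$. Let $B_n=\phi_{X_n}(A_n)$, $n=1,\dots,N$, and assume $B_n\neq B_{n'}$ whenever $n\neq n'$. Then there is a permutation $(m_1,\dots,m_N)$ of $\{1,\dots,N\}$ with $B_{m_1}<\dots<B_{m_N}$, and for every $\alpha\in[\frac{1}{N+1},1)$, setting $k=\lceil (N+1)(1-\alpha)\rceil$ (so $1\le k\le N$), the interval $$C=[f(X_{test})-\Delta,\ f(X_{test})+\Delta],\qquad \Delta=\sqrt{\phi_{X_{test}}^{-1}\big(B_{m_k}\big)},$$ where $\phi_{X_{test}}^{-1}:\mathcal{B}_{X_{test}}\to\mathbb{R}_+$ is the inverse of $\phi_{X_{test}}$, satisfies $$\mathrm{Prob}\big(Y_{test}\in C\big)\ge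 1-\alpha .$$
   Context: $\mathbb{R}_+=[0,\infty)$ denotes the set of possible values of the base conformity score $a(f(X),Y)=(f(X)-Y)^2$. The functions $\phi_x$ are attribute-dependent transformations of this conformity score; $B_n=\phi_{X_n}(A_n)$ are the transformed conformity scores of the calibration samples, and $B_{m_k}$ is the $k$-th smallest of them. "Marginally valid with confidence $1-\alpha$" means $\mathrm{Prob}(Y_{test}\in C)\ge 1-\alpha$, the probability being over all $N+1$ samples jointly. *)

theory Defs
  imports "HOL-Probability.Probability"
begin

definition tscore :: "('d \<Rightarrow> real) \<Rightarrow> ('d \<Rightarrow> real \<Rightarrow> real) \<Rightarrow> 'd \<Rightarrow> real \<Rightarrow> real" where
  "tscore f \<phi> x y = \<phi> x ((f x - y)\<^sup>2)"

definition sorting_perm :: "nat \<Rightarrow> (nat \<Rightarrow> real) \<Rightarrow> (nat \<Rightarrow> nat) \<Rightarrow> bool" where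
  "sorting_perm N B m \<longleftrightarrow> bij_betw m {1..N} {1..N} \<and>
     (\<forall>i j. 1 \<le> i \<longrightarrow> i < j \<longrightarrow> j \<le> N \<longrightarrow> B (m i) < B (m j))"

end

(* Since every phi_x is strictly increasing and all of them have the same range, the test label lies
   in C exactly when the transformed test score B_test = phi_{X_test}(A_test) is at most B_{m_k}, i.e.
   when fewer than k of the calibration scores lie strictly below B_test. The N+1 scores are i.i.d.,
   hence exchangeable, so each of them has fewer than k scores strictly below it with one and the same
   probability p. In every outcome at least k of the N+1 scores have this property, so
   (N+1) p >= k >= (N+1)(1 - alpha). *)

theory Submission
  imports Defs
begin

lemma DERIV_pos_imp_strict_mono_on:
  fixes g g' :: "real \<Rightarrow> real"
  assumes "\<And>a. c \<le> a \<Longrightarrow> (g has_real_derivative g' a) (at a within {c..}) \<and> g' a > 0"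
  shows "strict_mono_on {c..} g"
proof (rule strict_mono_onI)
  fix a b assume "a \<in> {c..}" "b \<in> {c..}" "a < b"
  show "g a < g b"
  proof (rule DERIV_pos_imp_increasing_open[OF \<open>a < b\<close>])
    fix x assume "a < x" "x < b"
    then have "at x within {c..} = at x"
      using \<open>a \<in> {c..}\<close> by (intro at_within_interior) auto
    then show "\<exists>y. DERIV g x :> y \<and> y > 0"
      using assms[of x] \<open>a < x\<close> \<open>a \<in> {c..}\<close> by auto
  next
    have "continuous_on {c..} g"
      using assms by (auto simp: continuous_on_eq_continuous_within intro: DERIV_continuous)
    then show "continuous_on {a..b} g"
      by (rule continuous_on_subset) (use \<open>a \<in> {c..}\<close> in auto)
  qed
qed

definition strict_rank :: "('i \<Rightarrow> 'b::linorder) \<Rightarrow> 'i set \<Rightarrow> 'i \<Rightarrow> nat" where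
  "strict_rank v I i = card {j\<in>I. v j < v i}"

lemma strict_rank_less_card:
  assumes "finite I" "i \<in> I"
  shows "strict_rank v I i < card I"
  unfolding strict_rank_def using assms by (intro psubset_card_mono) auto

lemma less_imp_strict_rank_less:
  assumes "finite I" "i \<in> I" "v i < v j"
  shows "strict_rank v I i < strict_rank v I j"
proof -
  have "v l < v j" if "v l < v i" for l
    using that assms(3) by (rule less_trans)
  then have "{l\<in>I. v l < v i} \<subseteq> {l\<in>I. v l < v j}"
    by blast
  moreover have "i \<in> {l\<in>I. v l < v j} - {l\<in>I. v l < v i}"
    using assms(2,3) by simp
  ultimately have "{l\<in>I. v l < v i} \<subset> {l\<in>I. v l < v j}"
    by blast
  then show ?thesis
    unfolding strict_rank_def using assms(1) by (intro psubset_card_mono) simp_all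
qed

lemma bij_betw_strict_rank:
  assumes "finite I" "inj_on v I"
  shows "bij_betw (strict_rank v I) I {..<card I}"
proof -
  have "inj_on (strict_rank v I) I"
  proof (rule inj_onI)
    fix i j assume ij: "i \<in> I" "j \<in> I" and eq: "strict_rank v I i = strict_rank v I j"
    show "i = j"
    proof (rule ccontr)
      assume "i \<noteq> j"
      then have "v i \<noteq> v j"
        using assms(2) ij by (auto dest: inj_onD)
      then have "v i < v j \<or> v j < v i"
        by (rule neq_iff[THEN iffD1])
      then show False
        using less_imp_strict_rank_less[OF assms(1) ij(1), of v j]
          less_imp_strict_rank_less[OF assms(1) ij(2), of v i] eq by auto
    qed
  qed
  moreover have "strict_rank v I ` I \<subseteq> {..<card I}"
    using strict_rank_less_card[OF assms(1)] by auto
  ultimately show ?thesis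
    by (simp add: bij_betw_def card_image card_subset_eq)
qed

lemma sorting_perm_exists:
  assumes "inj_on B {1..N}"
  shows "\<exists>m. sorting_perm N B m"
proof -
  let ?r = "\<lambda>j. Suc (strict_rank B {1..N} j)"
  have r: "bij_betw ?r {1..N} {1..N}"
  proof -
    have "bij_betw Suc {..<card {1..N}} {1..N}"
      by (rule bij_betw_byWitness[of _ "\<lambda>i. i - 1"]) auto
    from bij_betw_trans[OF bij_betw_strict_rank[OF _ assms] this]
    show ?thesis by (simp add: comp_def)
  qed
  define m where "m = the_inv_into {1..N} ?r"
  have m: "bij_betw m {1..N} {1..N}"
    unfolding m_def by (rule bij_betw_the_inv_into[OF r])
  have r_m: "?r (m i) = i" if "i \<in> {1..N}" for i
    unfolding m_def by (rule f_the_inv_into_f_bij_betw[OF r that])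
  have "B (m i) < B (m j)" if "1 \<le> i" "i < j" "j \<le> N" for i j
  proof (rule ccontr)
    assume "\<not> B (m i) < B (m j)"
    have mi: "m i \<in> {1..N}" and mj: "m j \<in> {1..N}"
      using bij_betw_apply[OF m] that by auto
    moreover have "m i \<noteq> m j"
      using bij_betw_imp_inj_on[OF m] that by (auto dest: inj_onD)
    ultimately have "B (m i) \<noteq> B (m j)"
      using assms by (auto dest: inj_onD)
    then have "B (m j) < B (m i)"
      using \<open>\<not> B (m i) < B (m j)\<close> by linarith
    then have "?r (m j) < ?r (m i)"
      using less_imp_strict_rank_less[OF _ mj] by simp
    then show False using r_m[of i] r_m[of j] that by simp
  qed
  then show ?thesis using m unfolding sorting_perm_def by blast
qed

lemma sorting_perm_le_iff:
  assumes "sorting_perm N B m" "1 \<le> k" "k \<le> N"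
  shows "b \<le> B (m k) \<longleftrightarrow> card {j\<in>{1..N}. B j < b} < k"
proof -
  have m: "bij_betw m {1..N} {1..N}"
    and less: "\<And>i j. 1 \<le> i \<Longrightarrow> i < j \<Longrightarrow> j \<le> N \<Longrightarrow> B (m i) < B (m j)"
    using assms(1) unfolding sorting_perm_def by auto
  have "m ` {i\<in>{1..N}. B (m i) < b} = {j\<in>m ` {1..N}. B j < b}"
    by auto
  then have "m ` {i\<in>{1..N}. B (m i) < b} = {j\<in>{1..N}. B j < b}"
    using m by (simp add: bij_betw_def)
  moreover have "inj_on m {i\<in>{1..N}. B (m i) < b}"
    using m by (auto simp: bij_betw_def intro: inj_on_subset)
  ultimately have card_eq: "card {j\<in>{1..N}. B j < b} = card {i\<in>{1..N}. B (m i) < b}"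
    by (metis card_image)
  have le: "B (m i) \<le> B (m j)" if "1 \<le> i" "i \<le> j" "j \<le> N" for i j
    using less[of i j] that by (cases "i = j") auto
  show ?thesis
  proof
    assume "b \<le> B (m k)"
    have "{i\<in>{1..N}. B (m i) < b} \<subseteq> {1..<k}"
    proof
      fix i assume i: "i \<in> {i\<in>{1..N}. B (m i) < b}"
      then have "\<not> k \<le> i"
        using le[of k i] assms(2) \<open>b \<le> B (m k)\<close> by auto
      then show "i \<in> {1..<k}" using i by simp
    qed
    then have "card {i\<in>{1..N}. B (m i) < b} \<le> card {1..<k}"
      by (intro card_mono) auto
    then show "card {j\<in>{1..N}. B j < b} < k"
      using assms(2) card_eq by simp
  next
    assume card_less: "card {j\<in>{1..N}. B j < b} < k"
    show "b \<le> B (m k)"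
    proof (rule ccontr)
      assume "\<not> b \<le> B (m k)"
      then have "B (m i) < b" if "1 \<le> i" "i \<le> k" for i
        using le[of i k] that assms(3) by linarith
      then have "{1..k} \<subseteq> {i\<in>{1..N}. B (m i) < b}"
        using assms(3) by auto
      then have "card {1..k} \<le> card {i\<in>{1..N}. B (m i) < b}"
        by (intro card_mono) auto
      then have "k \<le> card {i\<in>{1..N}. B (m i) < b}"
        by simp
      then show False using card_less card_eq by simp
    qed
  qed
qed

lemma card_strict_rank_less_ge:
  assumes "finite I" "k \<le> card I"
  shows "k \<le> card {i\<in>I. strict_rank v I i < k}"
proof (cases "{i\<in>I. strict_rank v I i < k} = I")
  case True
  then show ?thesis using assms(2) by simp
next
  case False
  define S where "S = {i\<in>I. strict_rank v I i < k}"
  \<comment> \<open>A \<open>v\<close>-minimal index outside \<open>S\<close> has at least \<open>k\<close> indices strictly below it, all of them in \<open>S\<close>.\<close>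
  have "finite (I - S)" "I - S \<noteq> {}"
    using assms(1) False by (auto simp: S_def)
  then obtain i0 where i0: "i0 \<in> I - S" and min: "\<And>j. j \<in> I - S \<Longrightarrow> v i0 \<le> v j"
    using arg_min_if_finite[of "I - S" v] by (metis not_le)
  have "{j\<in>I. v j < v i0} \<subseteq> S"
    using min by force
  then have "strict_rank v I i0 \<le> card S"
    unfolding strict_rank_def using assms(1) by (intro card_mono) (auto simp: S_def)
  moreover have "k \<le> strict_rank v I i0"
    using i0 by (auto simp: S_def not_less)
  ultimately show ?thesis by (simp add: S_def)
qed

lemma strict_rank_reindex:
  assumes "bij_betw \<sigma> I I" "i \<in> I" "\<And>j. j \<in> I \<Longrightarrow> w j = v (\<sigma> j)"
  shows "strict_rank w I i = strict_rank v I (\<sigma> i)"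
proof -
  have "\<sigma> ` {j\<in>I. w j < w i} = {j\<in>\<sigma> ` I. v j < v (\<sigma> i)}"
    using assms(2,3) by auto
  then have "\<sigma> ` {j\<in>I. w j < w i} = {j\<in>I. v j < v (\<sigma> i)}"
    using assms(1) by (simp add: bij_betw_def)
  moreover have "inj_on \<sigma> {j\<in>I. w j < w i}"
    using assms(1) by (auto simp: bij_betw_def intro: inj_on_subset)
  ultimately show ?thesis
    unfolding strict_rank_def by (metis card_image)
qed

lemma sets_strict_rank_less:
  fixes s :: "'b \<Rightarrow> real"
  assumes "finite I" "s \<in> borel_measurable D" "i \<in> I"
  shows "{z \<in> space (\<Pi>\<^sub>M j\<in>I. D). strict_rank (s \<circ> z) I i < k} \<in> sets (\<Pi>\<^sub>M j\<in>I. D)"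
proof -
  have "(\<lambda>z. \<Sum>j\<in>I. of_bool (s (z j) < s (z i)) :: real) \<in> borel_measurable (\<Pi>\<^sub>M j\<in>I. D)"
    using assms by measurable
  then have "{z \<in> space (\<Pi>\<^sub>M j\<in>I. D). (\<Sum>j\<in>I. of_bool (s (z j) < s (z i)) :: real) < real k}
      \<in> sets (\<Pi>\<^sub>M j\<in>I. D)"
    by measurable
  moreover have "(\<Sum>j\<in>I. of_bool (s (z j) < s (z i)) :: real) = real (strict_rank (s \<circ> z) I i)" for z
    using assms(1) by (simp add: strict_rank_def Int_def)
  ultimately show ?thesis by simp
qed

lemma prob_strict_rank_less_reindex:
  fixes s :: "'b \<Rightarrow> real" and \<sigma> :: "'i \<Rightarrow> 'i"
  assumes "prob_space D" "finite I" "s \<in> borel_measurable D" "bij_betw \<sigma> I I" "i \<in> I"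
  shows "measure (\<Pi>\<^sub>M j\<in>I. D) {z \<in> space (\<Pi>\<^sub>M j\<in>I. D). strict_rank (s \<circ> z) I (\<sigma> i) < k}
       = measure (\<Pi>\<^sub>M j\<in>I. D) {z \<in> space (\<Pi>\<^sub>M j\<in>I. D). strict_rank (s \<circ> z) I i < k}"
proof -
  let ?P = "\<Pi>\<^sub>M j\<in>I. D"
  let ?E = "\<lambda>i. {z \<in> space ?P. strict_rank (s \<circ> z) I i < k}"
  define t where "t z = (\<lambda>n\<in>I. z (\<sigma> n))" for z :: "'i \<Rightarrow> 'b"
  have "inj_on \<sigma> I" "\<sigma> \<in> I \<rightarrow> I"
    using assms(4) by (auto simp: bij_betw_def)
  then have t_meas: "t \<in> measurable ?P ?P" and distr_t: "distr ?P ?P t = ?P"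
    unfolding t_def using distr_PiM_reindex[of I "\<lambda>_. D" \<sigma> I] assms(1)
    by (auto intro!: measurable_restrict measurable_component_singleton)
  have "strict_rank (s \<circ> t z) I i = strict_rank (s \<circ> z) I (\<sigma> i)" for z
    by (rule strict_rank_reindex[OF assms(4,5)]) (simp add: t_def)
  then have "t -` ?E i \<inter> space ?P = ?E (\<sigma> i)"
    using measurable_space[OF t_meas] by auto
  then show ?thesis
    using measure_distr[OF t_meas sets_strict_rank_less[OF assms(2,3,5)]] distr_t by simp
qed

lemma (in prob_space) card_le_sum_prob:
  assumes "finite I" "\<And>i. i \<in> I \<Longrightarrow> A i \<in> events"
    and "\<And>x. x \<in> space M \<Longrightarrow> k \<le> card {i\<in>I. x \<in> A i}"
  shows "real k \<le> (\<Sum>i\<in>I. prob (A i))"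
proof -
  have "(\<Sum>i\<in>I. prob (A i)) = expectation (\<lambda>x. \<Sum>i\<in>I. indicator (A i) x)"
    using assms(2) by (subst Bochner_Integration.integral_sum)
      (auto intro: integrable_real_indicator simp: less_top[symmetric])
  moreover have "real k \<le> expectation (\<lambda>x. \<Sum>i\<in>I. indicator (A i) x)"
  proof (rule integral_ge_const)
    show "integrable M (\<lambda>x. \<Sum>i\<in>I. indicator (A i) x :: real)"
      using assms(2) by (auto intro: integrable_real_indicator simp: less_top[symmetric])
    have "(\<Sum>i\<in>I. indicator (A i) x :: real) = real (card {i\<in>I. x \<in> A i})" for x
      using assms(1) by (simp add: indicator_def of_bool_def[symmetric] Int_def)
    then show "AE x in M. real k \<le> (\<Sum>i\<in>I. indicator (A i) x)"
      using assms(3) by auto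
  qed
  ultimately show ?thesis by simp
qed

lemma prob_strict_rank_less_ge:
  fixes s :: "'b \<Rightarrow> real"
  assumes "prob_space D" "finite I" "s \<in> borel_measurable D" "i \<in> I" "k \<le> card I"
  shows "real k \<le> card I * measure (\<Pi>\<^sub>M j\<in>I. D) {z \<in> space (\<Pi>\<^sub>M j\<in>I. D). strict_rank (s \<circ> z) I i < k}"
proof -
  let ?P = "\<Pi>\<^sub>M j\<in>I. D"
  let ?E = "\<lambda>i. {z \<in> space ?P. strict_rank (s \<circ> z) I i < k}"
  interpret P: prob_space ?P
    using assms(1) by (intro prob_space_PiM) auto
  have "real k \<le> (\<Sum>j\<in>I. P.prob (?E j))"
    using assms card_strict_rank_less_ge[OF assms(2,5)]
    by (intro P.card_le_sum_prob sets_strict_rank_less) auto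
  also have "\<dots> = (\<Sum>j\<in>I. P.prob (?E i))"
  proof (rule sum.cong[OF refl])
    fix j assume "j \<in> I"
    then show "P.prob (?E j) = P.prob (?E i)"
      using prob_strict_rank_less_reindex[OF assms(1-3), of "Transposition.transpose i j" i] assms(4)
      by simp
  qed
  finally show ?thesis by simp
qed

lemma (in prob_space) distr_restrict_eq_PiM_if_iid:
  assumes "indep_vars (\<lambda>_. borel) Z I" "I \<noteq> {}" "\<And>i. i \<in> I \<Longrightarrow> distr M borel (Z i) = D"
  shows "distr M (\<Pi>\<^sub>M i\<in>I. D) (\<lambda>\<omega>. \<lambda>i\<in>I. Z i \<omega>) = (\<Pi>\<^sub>M i\<in>I. D)"
proof -
  have rv: "\<And>i. i \<in> I \<Longrightarrow> random_variable borel (Z i)"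
    using assms(1) by (auto simp: indep_vars_def2)
  have "sets D = sets borel"
    using assms(2,3) by (metis ex_in_conv sets_distr)
  then have "sets (\<Pi>\<^sub>M i\<in>I. D) = sets (\<Pi>\<^sub>M i\<in>I. borel)"
    by (intro sets_PiM_cong) auto
  then have "distr M (\<Pi>\<^sub>M i\<in>I. D) (\<lambda>\<omega>. \<lambda>i\<in>I. Z i \<omega>) = distr M (\<Pi>\<^sub>M i\<in>I. borel) (\<lambda>\<omega>. \<lambda>i\<in>I. Z i \<omega>)"
    by (rule distr_cong[OF refl _ refl])
  also have "\<dots> = (\<Pi>\<^sub>M i\<in>I. distr M borel (Z i))"
    using indep_vars_iff_distr_eq_PiM'[where M'="\<lambda>_. borel" and X=Z, OF assms(2)] rv assms(1) by blast
  also have "\<dots> = (\<Pi>\<^sub>M i\<in>I. D)"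
    using assms(3) by (intro PiM_cong) auto
  finally show ?thesis .
qed

lemma (in prob_space) iid_prob_strict_rank_less_ge:
  fixes s :: "'b::topological_space \<Rightarrow> real"
  assumes "indep_vars (\<lambda>_. borel) Z I" "\<And>j. j \<in> I \<Longrightarrow> distr M borel (Z j) = D"
    and "finite I" "i \<in> I" "k \<le> card I" "s \<in> borel_measurable borel"
  shows "real k \<le> card I * prob {\<omega> \<in> space M. strict_rank (\<lambda>j. s (Z j \<omega>)) I i < k}"
proof -
  let ?P = "\<Pi>\<^sub>M j\<in>I. D"
  let ?Zr = "\<lambda>\<omega>. \<lambda>j\<in>I. Z j \<omega>"
  have rv: "random_variable borel (Z i)"
    using assms(1,4) by (auto simp: indep_vars_def2)
  have D: "prob_space D" "sets D = sets borel"
    using prob_space_distr[OF rv] sets_distr[of M borel "Z i"] assms(2)[OF assms(4)] by simp_all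
  have distr_Zr: "distr M ?P ?Zr = ?P"
    using distr_restrict_eq_PiM_if_iid[OF assms(1) _ assms(2)] assms(4) by blast
  have Zr_meas: "?Zr \<in> measurable M ?P"
    using assms(1) D(2) by (intro measurable_restrict) (auto simp: indep_vars_def2 cong: measurable_cong_sets)
  have s_meas: "s \<in> borel_measurable D"
    using assms(6) D(2) by (simp cong: measurable_cong_sets)
  let ?E = "{z \<in> space ?P. strict_rank (s \<circ> z) I i < k}"
  have "strict_rank (s \<circ> ?Zr \<omega>) I i = strict_rank (\<lambda>j. s (Z j \<omega>)) I i" for \<omega>
    using strict_rank_reindex[of id I i "s \<circ> ?Zr \<omega>" "\<lambda>j. s (Z j \<omega>)"] assms(4) by simp
  then have "?Zr -` ?E \<inter> space M = {\<omega> \<in> space M. strict_rank (\<lambda>j. s (Z j \<omega>)) I i < k}"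
    using measurable_space[OF Zr_meas] by auto
  moreover have "measure M (?Zr -` ?E \<inter> space M) = measure ?P ?E"
    using measure_distr[OF Zr_meas sets_strict_rank_less[OF assms(3) s_meas assms(4)]] distr_Zr
    by simp
  ultimately show ?thesis
    using prob_strict_rank_less_ge[OF D(1) assms(3) s_meas assms(4,5)] by simp
qed

lemma borel_measurable_tscore:
  fixes f :: "'a::second_countable_topology \<Rightarrow> real"
  assumes "f \<in> borel_measurable borel" "(\<lambda>(x, a). \<phi> x a) \<in> borel_measurable borel"
  shows "(\<lambda>(x, y). tscore f \<phi> x y) \<in> borel_measurable borel"
proof -
  have "(\<lambda>z. (fst z, (f (fst z) - snd z)\<^sup>2)) \<in> borel_measurable (borel :: ('a \<times> real) measure)"
    unfolding borel_prod[symmetric] using assms(1) by measurable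
  from measurable_comp[OF this assms(2)] show ?thesis
    by (simp add: comp_def tscore_def case_prod_beta')
qed

lemma mem_interval_iff_tscore_le:
  assumes "strict_mono_on {0..} (\<phi> x)" "b \<in> \<phi> x ` {0..}"
  shows "y \<in> {f x - sqrt (the_inv_into {0..} (\<phi> x) b) .. f x + sqrt (the_inv_into {0..} (\<phi> x) b)}
     \<longleftrightarrow> tscore f \<phi> x y \<le> b"
proof -
  define a where "a = the_inv_into {0..} (\<phi> x) b"
  have inj: "inj_on (\<phi> x) {0..}"
    using assms(1) by (rule strict_mono_on_imp_inj_on)
  have a: "0 \<le> a" "\<phi> x a = b"
    unfolding a_def using the_inv_into_into[OF inj assms(2)] f_the_inv_into_f[OF inj assms(2)] by auto
  have "y \<in> {f x - sqrt a .. f x + sqrt a} \<longleftrightarrow> \<bar>f x - y\<bar> \<le> sqrt a"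
    by (auto simp: abs_le_iff)
  also have "\<dots> \<longleftrightarrow> (f x - y)\<^sup>2 \<le> a"
    by (metis real_sqrt_abs real_sqrt_le_iff)
  also have "\<dots> \<longleftrightarrow> tscore f \<phi> x y \<le> b"
    using strict_mono_on_less_eq[OF assms(1), of "(f x - y)\<^sup>2" a] a by (simp add: tscore_def)
  finally show ?thesis by (simp add: a_def)
qed

lemma mem_conformal_interval_iff_strict_rank:
  assumes "\<And>x. strict_mono_on {0..} (\<phi> x)" "\<And>x x'. \<phi> x ` {0..} = \<phi> x' ` {0..}"
    and "sorting_perm N (\<lambda>n. tscore f \<phi> (xs n) (ys n)) m" "1 \<le> k" "k \<le> N"
  defines "\<Delta> \<equiv> sqrt (the_inv_into {0..} (\<phi> (xs (N+1))) (tscore f \<phi> (xs (m k)) (ys (m k))))"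
  shows "ys (N+1) \<in> {f (xs (N+1)) - \<Delta> .. f (xs (N+1)) + \<Delta>}
     \<longleftrightarrow> strict_rank (\<lambda>n. tscore f \<phi> (xs n) (ys n)) {1..N+1} (N+1) < k"
proof -
  let ?B = "\<lambda>n. tscore f \<phi> (xs n) (ys n)"
  have "?B (m k) \<in> \<phi> (xs (m k)) ` {0..}"
    by (simp add: tscore_def)
  then have "?B (m k) \<in> \<phi> (xs (N+1)) ` {0..}"
    using assms(2) by metis
  then have "ys (N+1) \<in> {f (xs (N+1)) - \<Delta> .. f (xs (N+1)) + \<Delta>} \<longleftrightarrow> ?B (N+1) \<le> ?B (m k)"
    unfolding \<Delta>_def by (rule mem_interval_iff_tscore_le[OF assms(1)])
  also have "\<dots> \<longleftrightarrow> card {j\<in>{1..N}. ?B j < ?B (N+1)} < k"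
    by (rule sorting_perm_le_iff[OF assms(3-5)])
  also have "{j\<in>{1..N}. ?B j < ?B (N+1)} = {j\<in>{1..N+1}. ?B j < ?B (N+1)}"
    by (auto simp: le_Suc_eq)
  finally show ?thesis
    unfolding strict_rank_def .
qed

lemma (in prob_space) conformal_interval_coverage:
  fixes X :: "nat \<Rightarrow> 'a \<Rightarrow> 'x::second_countable_topology" and Y :: "nat \<Rightarrow> 'a \<Rightarrow> real"
  assumes indep: "indep_vars (\<lambda>_. borel) (\<lambda>n \<omega>. (X n \<omega>, Y n \<omega>)) {1..N+1}"
    and identical: "\<And>n. n \<in> {1..N+1} \<Longrightarrow> distr M borel (\<lambda>\<omega>. (X n \<omega>, Y n \<omega>)) = D"
    and f_meas: "f \<in> borel_measurable borel" and \<phi>_meas: "(\<lambda>(x, a). \<phi> x a) \<in> borel_measurable borel"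
    and mono: "\<And>x. strict_mono_on {0..} (\<phi> x)" and range: "\<And>x x'. \<phi> x ` {0..} = \<phi> x' ` {0..}"
    and sorting: "\<And>\<omega>. \<omega> \<in> space M \<Longrightarrow> sorting_perm N (\<lambda>n. tscore f \<phi> (X n \<omega>) (Y n \<omega>)) (m \<omega>)"
    and k: "1 \<le> k" "k \<le> N"
  defines "\<Delta> \<equiv> \<lambda>\<omega>. sqrt (the_inv_into {0..} (\<phi> (X (N+1) \<omega>)) (tscore f \<phi> (X (m \<omega> k) \<omega>) (Y (m \<omega> k) \<omega>)))"
  shows "real k / real (N + 1)
    \<le> prob {\<omega> \<in> space M. Y (N+1) \<omega> \<in> {f (X (N+1) \<omega>) - \<Delta> \<omega> .. f (X (N+1) \<omega>) + \<Delta> \<omega>}}"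
proof -
  let ?s = "\<lambda>(x, y). tscore f \<phi> x y"
  let ?low_rank = "{\<omega> \<in> space M. strict_rank (\<lambda>j. ?s (X j \<omega>, Y j \<omega>)) {1..N+1} (N+1) < k}"
  have "{\<omega> \<in> space M. Y (N+1) \<omega> \<in> {f (X (N+1) \<omega>) - \<Delta> \<omega> .. f (X (N+1) \<omega>) + \<Delta> \<omega>}} = ?low_rank"
  proof (rule Collect_cong)
    fix \<omega>
    show "\<omega> \<in> space M \<and> Y (N+1) \<omega> \<in> {f (X (N+1) \<omega>) - \<Delta> \<omega> .. f (X (N+1) \<omega>) + \<Delta> \<omega>}
      \<longleftrightarrow> \<omega> \<in> space M \<and> strict_rank (\<lambda>j. ?s (X j \<omega>, Y j \<omega>)) {1..N+1} (N+1) < k"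
      using mem_conformal_interval_iff_strict_rank[OF mono range sorting k] by (auto simp: \<Delta>_def)
  qed
  moreover have "real k \<le> real (N + 1) * prob ?low_rank"
    using iid_prob_strict_rank_less_ge[OF indep identical finite_atLeastAtMost _ _
        borel_measurable_tscore[OF f_meas \<phi>_meas]] k(2)
    by simp
  ultimately show ?thesis
    by (simp add: divide_le_eq mult.commute)
qed

lemma conformal_rank_bounds:
  fixes \<alpha> :: real
  assumes "1 / real (N + 1) \<le> \<alpha>" "\<alpha> < 1"
  defines "k \<equiv> nat \<lceil>real (N + 1) * (1 - \<alpha>)\<rceil>"
  shows "1 \<le> k" "k \<le> N" "1 - \<alpha> \<le> real k / real (N + 1)"
proof -
  have pos: "0 < real (N + 1) * (1 - \<alpha>)"
    using assms(2) by simp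
  have "1 \<le> real (N + 1) * \<alpha>"
    using assms(1) by (simp add: field_simps)
  then have "real (N + 1) * (1 - \<alpha>) \<le> real N"
    by (simp add: algebra_simps)
  then show "1 \<le> k" "k \<le> N"
    using pos unfolding k_def by (auto simp: ceiling_le_iff le_nat_iff)
  have "real (N + 1) * (1 - \<alpha>) \<le> real k"
    using pos unfolding k_def by (auto intro: le_of_int_ceiling)
  then show "1 - \<alpha> \<le> real k / real (N + 1)"
    by (simp add: field_simps)
qed

theorem theorem1:
  fixes M :: "'a measure"
    and N :: nat
    and X :: "nat \<Rightarrow> 'a \<Rightarrow> real ^ 'd"
    and Y :: "nat \<Rightarrow> 'a \<Rightarrow> real"
    and f :: "real ^ 'd \<Rightarrow> real"
    and \<phi> :: "real ^ 'd \<Rightarrow> real \<Rightarrow> real"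
    and \<phi>' :: "real ^ 'd \<Rightarrow> real \<Rightarrow> real"
  assumes prob: "prob_space M"
    and N_pos: "N \<ge> 1"
    and indep: "prob_space.indep_vars M (\<lambda>_. borel) (\<lambda>n \<omega>. (X n \<omega>, Y n \<omega>)) {1..N+1}"
    and ident: "\<forall>n\<in>{1..N+1}. distr M borel (\<lambda>\<omega>. (X n \<omega>, Y n \<omega>)) = distr M borel (\<lambda>\<omega>. (X 1 \<omega>, Y 1 \<omega>))"
    and f_meas: "f \<in> borel_measurable borel"
    and \<phi>_meas: "(\<lambda>(x, a). \<phi> x a) \<in> borel_measurable borel"
    and \<phi>_deriv: "\<forall>x. \<forall>a\<ge>0. (\<phi> x has_real_derivative \<phi>' x a) (at a within {0..}) \<and> \<phi>' x a > 0"
    and \<phi>_range: "\<forall>x x'. \<phi> x ` {0..} = \<phi> x' ` {0..}"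
    and distinct: "\<forall>\<omega>\<in>space M. \<forall>n\<in>{1..N}. \<forall>n'\<in>{1..N}. n \<noteq> n' \<longrightarrow>
                     tscore f \<phi> (X n \<omega>) (Y n \<omega>) \<noteq> tscore f \<phi> (X n' \<omega>) (Y n' \<omega>)"
  shows "(\<forall>\<omega>\<in>space M. \<exists>m. sorting_perm N (\<lambda>n. tscore f \<phi> (X n \<omega>) (Y n \<omega>)) m)
       \<and> (\<forall>m :: 'a \<Rightarrow> nat \<Rightarrow> nat.
            (\<forall>\<omega>\<in>space M. sorting_perm N (\<lambda>n. tscore f \<phi> (X n \<omega>) (Y n \<omega>)) (m \<omega>)) \<longrightarrow>
            (\<forall>\<alpha>::real. 1 / real (N + 1) \<le> \<alpha> \<and> \<alpha> < 1 \<longrightarrow>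
              (let k = nat \<lceil>real (N + 1) * (1 - \<alpha>)\<rceil> in
               measure M {\<omega> \<in> space M.
                  (let \<Delta> = sqrt (the_inv_into {0..} (\<phi> (X (N+1) \<omega>))
                                 (tscore f \<phi> (X (m \<omega> k) \<omega>) (Y (m \<omega> k) \<omega>)))
                   in Y (N+1) \<omega> \<in> {f (X (N+1) \<omega>) - \<Delta> .. f (X (N+1) \<omega>) + \<Delta>})}
               \<ge> 1 - \<alpha>)))"
proof -
  interpret prob_space M by (rule prob)
  have identical: "\<And>n. n \<in> {1..N+1} \<Longrightarrow>
      distr M borel (\<lambda>\<omega>. (X n \<omega>, Y n \<omega>)) = distr M borel (\<lambda>\<omega>. (X 1 \<omega>, Y 1 \<omega>))"
    using ident by blast
  have mono: "strict_mono_on {0..} (\<phi> x)" for x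
    using \<phi>_deriv by (intro DERIV_pos_imp_strict_mono_on) auto
  have "\<exists>m. sorting_perm N (\<lambda>n. tscore f \<phi> (X n \<omega>) (Y n \<omega>)) m" if "\<omega> \<in> space M" for \<omega>
    using distinct that by (intro sorting_perm_exists inj_onI) blast
  moreover have "1 - \<alpha> \<le> measure M {\<omega> \<in> space M.
        (let \<Delta> = sqrt (the_inv_into {0..} (\<phi> (X (N+1) \<omega>)) (tscore f \<phi> (X (m \<omega> k) \<omega>) (Y (m \<omega> k) \<omega>)))
         in Y (N+1) \<omega> \<in> {f (X (N+1) \<omega>) - \<Delta> .. f (X (N+1) \<omega>) + \<Delta>})}"
    if m: "\<forall>\<omega>\<in>space M. sorting_perm N (\<lambda>n. tscore f \<phi> (X n \<omega>) (Y n \<omega>)) (m \<omega>)"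
      and \<alpha>: "1 / real (N + 1) \<le> \<alpha>" "\<alpha> < 1" and k: "k = nat \<lceil>real (N + 1) * (1 - \<alpha>)\<rceil>"
    for m \<alpha> k
  proof -
    note bounds = conformal_rank_bounds[OF \<alpha>, folded k]
    show ?thesis
      unfolding Let_def
      by (rule order.trans[OF bounds(3) conformal_interval_coverage[OF indep identical f_meas \<phi>_meas
            mono \<phi>_range[rule_format] m[rule_format] bounds(1,2)]])
  qed
  ultimately show ?thesis
    unfolding Let_def[of "nat _"] by blast
qed

end
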